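(* Let $*$ be a rank-one preserving product on $M_{n\times m}(\mathbb{C})$, and write its identity element as $e f^*$ with $e\in\mathbb{C}^n$, $f\in\mathbb{C}^m$. Then for all $v,w\in\mathbb{C}^n$ there exists $u\in\mathbb{C}^n$ such that $v f^* * w f^* = u f^*$. Similarly, for all $v,w\in\mathbb{C}^m$ there exists $u\in\mathbb{C}^m$ such that $e v^* * e w^* = e u^*$.
   Context: A rank-one preserving product (ropp) on $M_{n\times m}(\mathbb{C})$ is an associative bilinear product $*$ on $M_{n\times m}(\mathbb{C})$ which has an identity element of rank one and such that the $*$-product of any two rank-one matrices has rank at most one. Here $u^*$ denotes the conjugate transpose of a column vector $u$. *)

theory Defs
  imports "HOL-Analysis.Analysis"
begin

text \<open>n x m complex matrices are rendered as complex^'m^'n (row index 'n, column index 'm).\<close>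

definition cmat_smult :: "complex \<Rightarrow> complex^'m^'n \<Rightarrow> complex^'m^'n" where
  "cmat_smult c A = (\<chi> i j. c * A $ i $ j)"

definition outer :: "complex^'n \<Rightarrow> complex^'m \<Rightarrow> complex^'m^'n" where
  "outer u v = (\<chi> i j. u $ i * cnj (v $ j))"

definition is_identity :: "(complex^'m^'n \<Rightarrow> complex^'m^'n \<Rightarrow> complex^'m^'n) \<Rightarrow> complex^'m^'n \<Rightarrow> bool" where
  "is_identity p E \<longleftrightarrow> (\<forall>X. p E X = X \<and> p X E = X)"

definition ropp :: "(complex^'m^'n \<Rightarrow> complex^'m^'n \<Rightarrow> complex^'m^'n) \<Rightarrow> bool" where
  "ropp p \<longleftrightarrow>
     (\<forall>A B C. p (A + B) C = p A C + p B C) \<and>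
     (\<forall>A B C. p A (B + C) = p A B + p A C) \<and>
     (\<forall>c A B. p (cmat_smult c A) B = cmat_smult c (p A B)) \<and>
     (\<forall>c A B. p A (cmat_smult c B) = cmat_smult c (p A B)) \<and>
     (\<forall>A B C. p (p A B) C = p A (p B C)) \<and>
     (\<exists>E. is_identity p E \<and> rank E = 1) \<and>
     (\<forall>A B. rank A = 1 \<longrightarrow> rank B = 1 \<longrightarrow> rank (p A B) \<le> 1)"

end

theory Submission
  imports Defs
begin

text \<open>Let E = e f^* be the identity and C = v f^* * w f^*. Bilinearity gives
  (v f^* + s E) * (w f^* + t E) = C + (t v + s w + s t e) f^*, and all these
  products have rank at most one. Choose k with f_k \<noteq> 0 and subtract from C the matrix
  c f^* having the same k-th column: the remainder R vanishes in column k, so the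
  2\<times>2 minors through column k force every column of R to be parallel to
  c + t v + s w + s t e for all s, t, hence to v, w and e. Thus R = 0 unless v and w are both
  multiples of e, in which case C is a multiple of E anyway. The statement about e v^* is
  the same argument for the transposed matrices.\<close>

lemma rank_eq_0_iff: "rank A = 0 \<longleftrightarrow> A = (0::'a::field^'m^'n)"
proof
  assume "rank A = 0"
  then have "row i A = 0" for i
    by (auto simp: row_rank_def_gen rows_def)
  then show "A = 0"
    by (simp add: row_def vec_eq_iff)
qed (auto simp: row_rank_def_gen rows_def row_def vec_eq_iff)

lemma rank_le_1_minors:
  fixes A :: "'a::field^'m^'n"
  assumes "rank A \<le> 1"
  shows "A$i$j * A$l$k = A$i$k * A$l$j"
proof -
  obtain B where B: "B \<subseteq> rows A" "vec.independent B" "rows A \<subseteq> vec.span B"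
      "card B = vec.dim (rows A)"
    by (rule vec.basis_exists)
  have "finite B"
    using B(2) vec.finiteI_independent by blast
  moreover have "card B \<le> 1"
    using assms B(4) by (simp add: row_rank_def_gen)
  ultimately have "\<forall>x\<in>B. \<forall>y\<in>B. x = y"
    by (simp add: card_le_Suc0_iff_eq)
  then have "B \<subseteq> {SOME z. z \<in> B}"
    by (metis singleton_iff someI subsetI)
  then obtain z where "rows A \<subseteq> vec.span {z}"
    using B(3) vec.span_mono by blast
  then have "row i A \<in> vec.span {z}" "row l A \<in> vec.span {z}"
    by (auto simp: rows_def)
  then obtain c d where "row i A = c *s z" "row l A = d *s z"
    unfolding vec.span_singleton by blast
  then have "A$i = c *s z" "A$l = d *s z"
    by (simp_all add: row_def)
  then show ?thesis
    by simp
qed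

lemma rank_outer_le_1: "rank (outer (x::complex^'n) (y::complex^'m)) \<le> 1"
proof -
  let ?y = "(\<chi> j. cnj (y$j)) :: complex^'m"
  have "rows (outer x y) \<subseteq> vec.span {?y}"
    by (auto simp: rows_def row_def outer_def vec.span_singleton vec_eq_iff)
  then show ?thesis
    using vec.dim_le_card[of _ "{?y}"] by (simp add: row_rank_def_gen)
qed

lemma ropp_rank_le_1:
  assumes "ropp p" "rank A \<le> 1" "rank B \<le> 1"
  shows "rank (p A B) \<le> 1"
proof -
  have "p 0 B = 0" "p A 0 = 0"
    using assms(1) unfolding ropp_def by (metis add_0 add_cancel_right_right)+
  then show ?thesis
    using assms unfolding ropp_def by (metis le_Suc_eq le_zero_eq One_nat_def rank_eq_0_iff)
qed

lemma ropp_identity_perturbation: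
  assumes "ropp p" "is_identity p E"
  shows "p (A + cmat_smult s E) (B + cmat_smult t E)
       = p A B + cmat_smult t A + cmat_smult s B + cmat_smult (s * t) E"
proof -
  have "\<And>A B C. p (A + B) C = p A C + p B C" "\<And>A B C. p A (B + C) = p A B + p A C"
    "\<And>c A B. p (cmat_smult c A) B = cmat_smult c (p A B)"
    "\<And>c A B. p A (cmat_smult c B) = cmat_smult c (p A B)"
    using assms(1) unfolding ropp_def by blast+
  then show ?thesis
    using assms(2)
    by (simp only:) (simp add: is_identity_def cmat_smult_def vec_eq_iff algebra_simps)
qed

lemma ropp_identity_smult:
  assumes "ropp p" "is_identity p E"
  shows "p (cmat_smult b E) (cmat_smult c E) = cmat_smult (b * c) E"
proof -
  have "p (cmat_smult b E) (cmat_smult c E) = cmat_smult c (cmat_smult b (p E E))"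
    using assms(1) unfolding ropp_def by simp
  then show ?thesis
    using assms(2) by (simp add: is_identity_def cmat_smult_def vec_eq_iff mult.assoc)
qed

lemma identity_outer_nonzero:
  assumes "ropp p" "is_identity p (outer e f)"
  shows "e \<noteq> 0" "f \<noteq> 0"
proof -
  obtain E where "is_identity p E" "rank E = 1"
    using assms(1) unfolding ropp_def by blast
  then have "rank (outer e f) = 1"
    using assms(2) unfolding is_identity_def by metis
  then have "outer e f \<noteq> 0"
    using rank_eq_0_iff[of "outer e f"] by auto
  then show "e \<noteq> 0" "f \<noteq> 0"
    by (auto simp: outer_def vec_eq_iff)
qed

text \<open>Matrices are taken here as functions of their two indices, so that the lemma applies
  to transposed matrices without further ado.\<close>

lemma perturbed_rank_le_1_imp_outer:
  fixes C :: "'a \<Rightarrow> 'b \<Rightarrow> 'k::field" and g :: "'b \<Rightarrow> 'k" and v w e :: "'a \<Rightarrow> 'k"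
  assumes gk: "g k \<noteq> 0" and em: "e m \<noteq> 0"
    and minors: "\<And>s t i j l.
        (C i j + (t * v i + s * w i + s * t * e i) * g j)
          * (C l k + (t * v l + s * w l + s * t * e l) * g k)
      = (C i k + (t * v i + s * w i + s * t * e i) * g k)
          * (C l j + (t * v l + s * w l + s * t * e l) * g j)"
  shows "(\<exists>u. \<forall>i j. C i j = u i * g j)
       \<or> (\<exists>\<beta> \<gamma>. \<forall>i. v i = \<beta> * e i \<and> w i = \<gamma> * e i)"
proof -
  define c where "c i = C i k / g k" for i
  define R where "R i j = C i j - c i * g j" for i j
  have shift: "C i j + y * g j = R i j + (c i + y) * g j" for i j y
    by (simp add: R_def algebra_simps)
  have "R i k = 0" for i
    using gk by (simp add: R_def c_def)
  \<comment> \<open>the minors through column k make every column of R parallel to c + t v + s w + s t e\<close>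
  then have "g k * (R i j * (c l + (t * v l + s * w l + s * t * e l))
                  - (c i + (t * v i + s * w i + s * t * e i)) * R l j) = 0" for s t i j l
    using minors[of i j t s l] unfolding shift by (simp add: algebra_simps)
  then have parallel: "R i j * (c l + (t * v l + s * w l + s * t * e l))
                     = (c i + (t * v i + s * w i + s * t * e i)) * R l j" for s t i j l
    using gk by simp
  have par_c: "R i j * c l = c i * R l j" for i j l
    using parallel[where s=0 and t=0 and i=i and j=j and l=l] by simp
  have par_v: "R i j * v l = v i * R l j" for i j l
    using parallel[where s=0 and t=1 and i=i and j=j and l=l] par_c[of i j l]
    by (simp add: distrib_left distrib_right)
  have par_w: "R i j * w l = w i * R l j" for i j l
    using parallel[where s=1 and t=0 and i=i and j=j and l=l] par_c[of i j l]
    by (simp add: distrib_left distrib_right)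
  have par_e: "R i j * e l = e i * R l j" for i j l
    using parallel[where s=1 and t=1 and i=i and j=j and l=l]
      par_c[of i j l] par_v[of i j l] par_w[of i j l]
    by (simp add: distrib_left distrib_right)
  show ?thesis
  proof (cases "\<forall>i j. R i j = 0")
    case True
    then show ?thesis
      by (auto simp: R_def)
  next
    case False
    then obtain i j where Rij: "R i j \<noteq> 0"
      by blast
    then have ei: "e i \<noteq> 0"
      using par_e[of i j m] em by auto
    have "x l = x i / e i * e l"
      if par_x: "\<And>l. R i j * x l = x i * R l j" for x l
    proof -
      have "e i * x l * R i j = x i * (e i * R l j)"
        using par_x[of l] by (simp add: ac_simps)
      also have "\<dots> = x i * e l * R i j"
        using par_e[of i j l] by (simp add: ac_simps)
      finally show ?thesis
        using Rij ei by (simp add: field_simps)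
    qed
    then have "v l = v i / e i * e l \<and> w l = w i / e i * e l" for l
      using par_v par_w by blast
    then show ?thesis
      by blast
  qed
qed

lemma ropp_outer_fixed_right_closed:
  assumes p: "ropp p" and E: "is_identity p (outer e f)"
  shows "\<exists>u. p (outer v f) (outer w f) = outer u f"
proof -
  let ?E = "outer e f" and ?C = "p (outer v f) (outer w f)"
  obtain m k where em: "e$m \<noteq> 0" and fk: "f$k \<noteq> 0"
    using identity_outer_nonzero[OF p E] by (metis vec_eq_iff zero_index)
  have perturbed: "p (outer (v + s *s e) f) (outer (w + t *s e) f) $i$j
      = ?C$i$j + (t * v$i + s * w$i + s * t * e$i) * cnj (f$j)" for s t i j
  proof -
    have shift: "outer (v + s *s e) f = outer v f + cmat_smult s ?E"
      "outer (w + t *s e) f = outer w f + cmat_smult t ?E"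
      by (simp_all add: outer_def cmat_smult_def vec_eq_iff algebra_simps)
    show ?thesis
      unfolding shift ropp_identity_perturbation[OF p E]
      by (simp add: outer_def cmat_smult_def algebra_simps)
  qed
  note minors = rank_le_1_minors[OF ropp_rank_le_1[OF p rank_outer_le_1 rank_outer_le_1]]
  have "(\<exists>u. \<forall>i j. ?C$i$j = u i * cnj (f$j))
      \<or> (\<exists>\<beta> \<gamma>. \<forall>i. v$i = \<beta> * e$i \<and> w$i = \<gamma> * e$i)"
    by (rule perturbed_rank_le_1_imp_outer[where k=k and m=m])
      (use fk em in simp_all, unfold perturbed[symmetric], rule minors)
  then show ?thesis
  proof (elim disjE exE)
    fix u assume "\<forall>i j. ?C$i$j = u i * cnj (f$j)"
    then have "?C = outer (\<chi> i. u i) f"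
      by (simp add: outer_def vec_eq_iff)
    then show ?thesis ..
  next
    fix \<beta> \<gamma> assume "\<forall>i. v$i = \<beta> * e$i \<and> w$i = \<gamma> * e$i"
    then have "outer v f = cmat_smult \<beta> ?E" "outer w f = cmat_smult \<gamma> ?E"
      by (simp_all add: outer_def cmat_smult_def vec_eq_iff)
    then have "?C = cmat_smult (\<beta> * \<gamma>) ?E"
      by (simp add: ropp_identity_smult[OF p E])
    also have "\<dots> = outer ((\<beta> * \<gamma>) *s e) f"
      by (simp add: outer_def cmat_smult_def vec_eq_iff mult.assoc)
    finally show ?thesis ..
  qed
qed

lemma ropp_outer_fixed_left_closed:
  assumes p: "ropp p" and E: "is_identity p (outer e f)"
  shows "\<exists>u. p (outer e v) (outer e w) = outer e u"
proof -
  let ?E = "outer e f" and ?C = "p (outer e v) (outer e w)"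
  obtain m k where em: "e$m \<noteq> 0" and fk: "f$k \<noteq> 0"
    using identity_outer_nonzero[OF p E] by (metis vec_eq_iff zero_index)
  have perturbed: "p (outer e (v + cnj s *s f)) (outer e (w + cnj t *s f)) $i$j
      = ?C$i$j + (t * cnj (v$j) + s * cnj (w$j) + s * t * cnj (f$j)) * e$i" for s t i j
  proof -
    have shift: "outer e (v + cnj s *s f) = outer e v + cmat_smult s ?E"
      "outer e (w + cnj t *s f) = outer e w + cmat_smult t ?E"
      by (simp_all add: outer_def cmat_smult_def vec_eq_iff algebra_simps)
    show ?thesis
      unfolding shift ropp_identity_perturbation[OF p E]
      by (simp add: outer_def cmat_smult_def algebra_simps)
  qed
  note minors = rank_le_1_minors[OF ropp_rank_le_1[OF p rank_outer_le_1 rank_outer_le_1]]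
  \<comment> \<open>the argument for the right factor, applied to the transpose of C\<close>
  have "(\<exists>u. \<forall>j i. ?C$i$j = u j * e$i)
      \<or> (\<exists>\<beta> \<gamma>. \<forall>j. cnj (v$j) = \<beta> * cnj (f$j) \<and> cnj (w$j) = \<gamma> * cnj (f$j))"
    by (rule perturbed_rank_le_1_imp_outer[where k=m and m=k])
      (use fk em in simp_all, unfold perturbed[symmetric], rule trans[OF minors mult.commute])
  then show ?thesis
  proof (elim disjE exE)
    fix u assume "\<forall>j i. ?C$i$j = u j * e$i"
    then have "?C = outer e (\<chi> j. cnj (u j))"
      by (simp add: outer_def vec_eq_iff mult.commute)
    then show ?thesis ..
  next
    fix \<beta> \<gamma> assume "\<forall>j. cnj (v$j) = \<beta> * cnj (f$j) \<and> cnj (w$j) = \<gamma> * cnj (f$j)"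
    then have "outer e v = cmat_smult \<beta> ?E" "outer e w = cmat_smult \<gamma> ?E"
      by (simp_all add: outer_def cmat_smult_def vec_eq_iff mult.left_commute)
    then have "?C = cmat_smult (\<beta> * \<gamma>) ?E"
      by (simp add: ropp_identity_smult[OF p E])
    also have "\<dots> = outer e (cnj (\<beta> * \<gamma>) *s f)"
      by (simp add: outer_def cmat_smult_def vec_eq_iff algebra_simps)
    finally show ?thesis ..
  qed
qed

theorem mainTheorem2:
  fixes p :: "complex^'m^'n \<Rightarrow> complex^'m^'n \<Rightarrow> complex^'m^'n"
    and e :: "complex^'n" and f :: "complex^'m"
  assumes "ropp p"
    and "is_identity p (outer e f)"
  shows "(\<forall>v w :: complex^'n. \<exists>u. p (outer v f) (outer w f) = outer u f)
       \<and> (\<forall>v w :: complex^'m. \<exists>u. p (outer e v) (outer e w) = outer e u)"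
  using ropp_outer_fixed_right_closed[OF assms] ropp_outer_fixed_left_closed[OF assms] by blast

end
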